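(* Let $(M,g)$ be an $n$-dimensional Lorentzian manifold with Levi-Civita connection $\nabla$, let $u$ be a unit timelike vector field ($u_pu^p=-1$), and let $A,B$ be smooth scalar fields with $B\neq 0$. The perfect fluid tensor $K_{jk}=Ag_{jk}+Bu_ju_k$ is a conformal Killing tensor if and only if (1) the velocity $u$ is shear-free ($\sigma_{ij}=0$), and (2) $H=\dfrac{\dot B}{2B}$ and $\nabla_jB=-\dot B\,u_j+2B\,\dot u_j$. In that case the conformal vector of $K$ is $\eta_j=\nabla_jA+\dot B\,u_j$, and the scalar field $A$ is unconstrained.
   Context: A symmetric tensor $K_{ij}$ on an $n$-dimensional pseudo-Riemannian manifold is a conformal Killing tensor (CKT) if $\nabla_iK_{jl}+\nabla_jK_{li}+\nabla_lK_{ij}=\eta_ig_{jl}+\eta_jg_{li}+\eta_lg_{ij}$ for some covector $\eta_i$; necessarily $\eta_i=\frac{\nabla_iK+2\nabla_jK^j{}_i}{n+2}$ with $K=g^{ij}K_{ij}$, and $\eta_i$ is called the conformal vector. For a scalar $f$, $\dot f=u^k\nabla_kf$; the acceleration is $\dot u_j=u^k\nabla_ku_j$. Every unit timelike vector field has the canonical decomposition $\nabla_iu_j=H(g_{ij}+u_iu_j)-u_i\dot u_j+\omega_{ij}+\sigma_{ij}$, where $H=\frac{1}{n-1}\nabla_ru^r$ is the expansion, $\omega_{ij}=-\omega_{ji}$ the vorticity, $\sigma_{ij}=\sigma_{ji}$ the shear, with $g^{ij}\sigma_{ij}=0$ and $\omega_{ij}u^j=\sigma_{ij}u^j=0$. 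*)

theory Defs
  imports "HOL-Analysis.Analysis"
begin

text \<open>Local coordinate formalization on an open set U of real^'n (index type 'n, n = CARD('n)).
Fields: metric g (lower components g x $ i $ j), vector field u (upper components u x $ i),
covector fields as functions real^'n => 'n => real, (0,2)-tensors as real^'n => 'n => 'n => real.\<close>

definition partial :: "'n::finite \<Rightarrow> (real^'n \<Rightarrow> real) \<Rightarrow> real^'n \<Rightarrow> real" where
  "partial i f x = frechet_derivative f (at x) (axis i 1)"

fun pd :: "'n::finite list \<Rightarrow> (real^'n \<Rightarrow> real) \<Rightarrow> real^'n \<Rightarrow> real" where
  "pd [] f = f"
| "pd (i # is) f = (\<lambda>x. partial i (pd is f) x)"

definition smooth_on :: "(real^'n::finite) set \<Rightarrow> (real^'n \<Rightarrow> real) \<Rightarrow> bool" where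
  "smooth_on U f \<longleftrightarrow> (\<forall>is. \<forall>x\<in>U. pd is f differentiable (at x))"

definition lorentzian_on :: "(real^'n::finite) set \<Rightarrow> (real^'n \<Rightarrow> real^'n^'n) \<Rightarrow> bool" where
  "lorentzian_on U g \<longleftrightarrow> (\<forall>x\<in>U. transpose (g x) = g x \<and>
     (\<exists>(P::real^'n^'n) i0. invertible P \<and>
        transpose P ** g x ** P = (\<chi> i j. if i = j then (if i = i0 then -1 else 1) else 0)))"

definition ginv :: "(real^'n::finite \<Rightarrow> real^'n^'n) \<Rightarrow> real^'n \<Rightarrow> real^'n^'n" where
  "ginv g x = matrix_inv (g x)"

text \<open>Christoffel symbols of the Levi-Civita connection: christoffel g x k i j = Gamma^k_{ij}.\<close>
definition christoffel :: "(real^'n::finite \<Rightarrow> real^'n^'n) \<Rightarrow> real^'n \<Rightarrow> 'n \<Rightarrow> 'n \<Rightarrow> 'n \<Rightarrow> real" where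
  "christoffel g x k i j = (1/2) * (\<Sum>l\<in>UNIV. ginv g x $ k $ l *
      (partial i (\<lambda>y. g y $ l $ j) x + partial j (\<lambda>y. g y $ l $ i) x - partial l (\<lambda>y. g y $ i $ j) x))"

definition cov_d1 :: "(real^'n::finite \<Rightarrow> real^'n^'n) \<Rightarrow> (real^'n \<Rightarrow> 'n \<Rightarrow> real) \<Rightarrow> real^'n \<Rightarrow> 'n \<Rightarrow> 'n \<Rightarrow> real" where
  "cov_d1 g w x i j = partial i (\<lambda>y. w y j) x - (\<Sum>k\<in>UNIV. christoffel g x k i j * w x k)"

definition cov_d2 :: "(real^'n::finite \<Rightarrow> real^'n^'n) \<Rightarrow> (real^'n \<Rightarrow> 'n \<Rightarrow> 'n \<Rightarrow> real) \<Rightarrow> real^'n \<Rightarrow> 'n \<Rightarrow> 'n \<Rightarrow> 'n \<Rightarrow> real" where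
  "cov_d2 g T x i j l = partial i (\<lambda>y. T y j l) x
      - (\<Sum>k\<in>UNIV. christoffel g x k i j * T x k l)
      - (\<Sum>k\<in>UNIV. christoffel g x k i l * T x j k)"

definition lower :: "(real^'n::finite \<Rightarrow> real^'n^'n) \<Rightarrow> (real^'n \<Rightarrow> real^'n) \<Rightarrow> real^'n \<Rightarrow> 'n \<Rightarrow> real" where
  "lower g u x j = (\<Sum>k\<in>UNIV. g x $ j $ k * u x $ k)"

definition accel :: "(real^'n::finite \<Rightarrow> real^'n^'n) \<Rightarrow> (real^'n \<Rightarrow> real^'n) \<Rightarrow> real^'n \<Rightarrow> 'n \<Rightarrow> real" where
  "accel g u x j = (\<Sum>k\<in>UNIV. u x $ k * cov_d1 g (lower g u) x k j)"

definition dotd :: "(real^'n::finite \<Rightarrow> real^'n) \<Rightarrow> (real^'n \<Rightarrow> real) \<Rightarrow> real^'n \<Rightarrow> real" where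
  "dotd u f x = (\<Sum>k\<in>UNIV. u x $ k * partial k f x)"

text \<open>Expansion H = (1/(n-1)) nabla_r u^r.\<close>
definition expansion :: "(real^'n::finite \<Rightarrow> real^'n^'n) \<Rightarrow> (real^'n \<Rightarrow> real^'n) \<Rightarrow> real^'n \<Rightarrow> real" where
  "expansion g u x = (1 / (real CARD('n) - 1)) *
     ((\<Sum>r\<in>UNIV. partial r (\<lambda>y. u y $ r) x) + (\<Sum>r\<in>UNIV. \<Sum>k\<in>UNIV. christoffel g x r r k * u x $ k))"

text \<open>Shear: the symmetric trace-free part sigma_{ij} in the canonical decomposition
  nabla_i u_j = H h_{ij} - u_i a_j + omega_{ij} + sigma_{ij}, i.e.
  sigma_{ij} = nabla_(i u_j) + u_(i a_j) - H (g_{ij} + u_i u_j).\<close>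
definition shear :: "(real^'n::finite \<Rightarrow> real^'n^'n) \<Rightarrow> (real^'n \<Rightarrow> real^'n) \<Rightarrow> real^'n \<Rightarrow> 'n \<Rightarrow> 'n \<Rightarrow> real" where
  "shear g u x i j =
     (cov_d1 g (lower g u) x i j + cov_d1 g (lower g u) x j i) / 2
     + (lower g u x i * accel g u x j + lower g u x j * accel g u x i) / 2
     - expansion g u x * (g x $ i $ j + lower g u x i * lower g u x j)"

definition ckt_eq :: "(real^'n::finite) set \<Rightarrow> (real^'n \<Rightarrow> real^'n^'n) \<Rightarrow> (real^'n \<Rightarrow> 'n \<Rightarrow> 'n \<Rightarrow> real) \<Rightarrow> (real^'n \<Rightarrow> 'n \<Rightarrow> real) \<Rightarrow> bool" where
  "ckt_eq U g K eta \<longleftrightarrow> (\<forall>x\<in>U. \<forall>i j l.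
     cov_d2 g K x i j l + cov_d2 g K x j l i + cov_d2 g K x l i j
       = eta x i * g x $ j $ l + eta x j * g x $ l $ i + eta x l * g x $ i $ j)"

definition is_CKT :: "(real^'n::finite) set \<Rightarrow> (real^'n \<Rightarrow> real^'n^'n) \<Rightarrow> (real^'n \<Rightarrow> 'n \<Rightarrow> 'n \<Rightarrow> real) \<Rightarrow> bool" where
  "is_CKT U g K \<longleftrightarrow> (\<exists>eta. ckt_eq U g K eta)"

definition perfect_fluid :: "(real^'n::finite \<Rightarrow> real^'n^'n) \<Rightarrow> (real^'n \<Rightarrow> real^'n) \<Rightarrow> (real^'n \<Rightarrow> real) \<Rightarrow> (real^'n \<Rightarrow> real) \<Rightarrow> real^'n \<Rightarrow> 'n \<Rightarrow> 'n \<Rightarrow> real" where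
  "perfect_fluid g u A B x j k = A x * g x $ j $ k + B x * lower g u x j * lower g u x k"

end

theory Submission
  imports Defs
begin

(* Because g is parallel, \<nabla>_i K_jl = (\<nabla>_i A) g_jl + (\<nabla>_i B) u_j u_l + B (\<nabla>_i u_j u_l + u_j \<nabla>_i u_l).
   Let e = \<nabla>A + B' u - \<eta> and b = \<nabla>B + B' u - 2B u' be the defects of the claimed conformal
   vector and of the claimed gradient of B (B' = u^k \<nabla>_k B, u' the acceleration), and let
   S_ij = \<nabla>_(i u_j) + u_(i u'_j) - (B'/2B) h_ij with h = g + u \<otimes> u. Then the conformal Killing
   equation says that the cyclic sum of e_i g_jl + b_i u_j u_l + 2B S_ij u_l vanishes, and b and S are
   orthogonal to u. Contracting with u once and twice gives e = b and S = 0; a trace with the inverse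
   metric then gives (n + 1) e = 0. Finally S = \<sigma> + (H - B'/2B) h, and since \<sigma> is trace-free while h
   has trace n - 1, S = 0 says exactly that \<sigma> = 0 and H = B'/2B. *)

lemma partial_eq_derivative:
  assumes "(f has_derivative f') (at x)"
  shows "partial i f x = f' (axis i 1)"
  using frechet_derivative_at[OF assms] unfolding partial_def by simp

lemma partial_mult:
  assumes "f differentiable (at x)" "h differentiable (at x)"
  shows "partial i (\<lambda>y. f y * h y) x = partial i f x * h x + f x * partial i h x"
proof -
  from assms obtain f' h' where F: "(f has_derivative f') (at x)" and H: "(h has_derivative h') (at x)"
    by (auto simp: differentiable_def)
  show ?thesis
    using partial_eq_derivative[OF has_derivative_mult[OF F H]]
      partial_eq_derivative[OF F] partial_eq_derivative[OF H] by (simp add: mult.commute)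
qed

lemma partial_add:
  assumes "f differentiable (at x)" "h differentiable (at x)"
  shows "partial i (\<lambda>y. f y + h y) x = partial i f x + partial i h x"
proof -
  from assms obtain f' h' where F: "(f has_derivative f') (at x)" and H: "(h has_derivative h') (at x)"
    by (auto simp: differentiable_def)
  show ?thesis
    using partial_eq_derivative[OF has_derivative_add[OF F H]]
      partial_eq_derivative[OF F] partial_eq_derivative[OF H] by simp
qed

lemma partial_sum:
  fixes f :: "'k::finite \<Rightarrow> real^'n::finite \<Rightarrow> real"
  assumes "\<And>k. f k differentiable (at x)"
  shows "partial i (\<lambda>y. \<Sum>k\<in>UNIV. f k y) x = (\<Sum>k\<in>UNIV. partial i (f k) x)"
proof -
  have "\<And>k. (f k has_derivative frechet_derivative (f k) (at x)) (at x)"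
    using assms frechet_derivative_works by blast
  then have "((\<lambda>y. \<Sum>k\<in>UNIV. f k y) has_derivative (\<lambda>v. \<Sum>k\<in>UNIV. frechet_derivative (f k) (at x) v)) (at x)"
    by (intro has_derivative_sum) auto
  from partial_eq_derivative[OF this] show ?thesis unfolding partial_def by simp
qed

lemma partial_locally_constant:
  assumes "open U" "x \<in> U" "\<And>y. y \<in> U \<Longrightarrow> f y = c"
  shows "partial i f x = 0"
proof -
  have "(f has_derivative (\<lambda>h. 0)) (at x)"
    by (rule has_derivative_transform_within_open[of "\<lambda>y. c", OF _ assms(1,2)]) (use assms(3) in auto)
  from partial_eq_derivative[OF this] show ?thesis by simp
qed

lemma partial_cong_open:
  assumes "f differentiable (at x)" "open U" "x \<in> U" "\<And>y. y \<in> U \<Longrightarrow> f y = h y"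
  shows "partial i f x = partial i h x"
  unfolding partial_def using frechet_derivative_transform_within_open[OF assms] by simp

lemma smooth_on_differentiable: "smooth_on U f \<Longrightarrow> x \<in> U \<Longrightarrow> f differentiable (at x)"
  unfolding smooth_on_def by (metis pd.simps(1))

lemma sum_mult_delta:
  fixes f :: "'n::finite \<Rightarrow> 'a::semiring_1"
  shows "(\<Sum>j\<in>UNIV. f j * (if j = i then 1 else 0)) = f i"
    and "(\<Sum>j\<in>UNIV. (if i = j then 1 else 0) * f j) = f i"
proof -
  have "(\<Sum>j\<in>UNIV. f j * (if j = i then 1 else 0)) = (\<Sum>j\<in>UNIV. if j = i then f j else 0)"
    by (rule sum.cong) simp_all
  then show "(\<Sum>j\<in>UNIV. f j * (if j = i then 1 else 0)) = f i" by simp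
  have "(\<Sum>j\<in>UNIV. (if i = j then 1 else 0) * f j) = (\<Sum>j\<in>UNIV. if i = j then f j else 0)"
    by (rule sum.cong) simp_all
  then show "(\<Sum>j\<in>UNIV. (if i = j then 1 else 0) * f j) = f i" by simp
qed

lemma matrix_inv_mult:
  fixes A :: "real^'n::finite^'n"
  assumes "invertible A"
  shows "A ** matrix_inv A = mat 1" "matrix_inv A ** A = mat 1"
proof -
  have "\<exists>A'. A ** A' = mat 1 \<and> A' ** A = mat 1" using assms unfolding invertible_def by blast
  then have "A ** matrix_inv A = mat 1 \<and> matrix_inv A ** A = mat 1"
    unfolding matrix_inv_def by (rule someI_ex)
  then show "A ** matrix_inv A = mat 1" "matrix_inv A ** A = mat 1" by auto
qed

lemma transpose_eq_sym: "transpose A = A \<Longrightarrow> A $ i $ j = A $ j $ i"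
  by (metis transpose_def vec_lambda_beta)

lemma lorentzian_on_symmetric: "lorentzian_on U g \<Longrightarrow> x \<in> U \<Longrightarrow> g x $ i $ j = g x $ j $ i"
  unfolding lorentzian_on_def by (blast intro: transpose_eq_sym)

lemma lorentzian_on_invertible:
  fixes g :: "real^'n::finite \<Rightarrow> real^'n^'n"
  assumes "lorentzian_on U g" "x \<in> U"
  shows "invertible (g x)"
proof -
  obtain P i0 where "invertible (P::real^'n^'n)"
     and D: "transpose P ** g x ** P = (\<chi> i j. if i = j then (if i = i0 then -1 else 1) else 0)"
    using assms unfolding lorentzian_on_def by blast
  let ?D = "(\<chi> i j. if i = j then (if i = i0 then -1 else 1) else 0) :: real^'n^'n"
  have "det ?D = (\<Prod>i\<in>UNIV. ?D $ i $ i)" by (rule det_diagonal) simp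
  then have "det ?D \<noteq> 0" by (simp add: prod_zero_iff)
  moreover have "det ?D = det (transpose P) * det (g x) * det P" unfolding D[symmetric] by (simp add: det_mul)
  ultimately show ?thesis by (simp add: invertible_det_nz)
qed

definition christoffel_first :: "(real^'n::finite \<Rightarrow> real^'n^'n) \<Rightarrow> real^'n \<Rightarrow> 'n \<Rightarrow> 'n \<Rightarrow> 'n \<Rightarrow> real" where
  "christoffel_first g x m i j = (1/2) *
     (partial i (\<lambda>y. g y $ m $ j) x + partial j (\<lambda>y. g y $ m $ i) x - partial m (\<lambda>y. g y $ i $ j) x)"

lemma christoffel_eq_ginv_christoffel_first:
  "christoffel g x k i j = (\<Sum>m\<in>UNIV. ginv g x $ k $ m * christoffel_first g x m i j)"
  unfolding christoffel_def christoffel_first_def by (simp add: sum_distrib_left mult_ac)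

locale metric_chart =
  fixes U :: "(real^'n::finite) set" and g :: "real^'n \<Rightarrow> real^'n^'n"
  assumes open_U: "open U"
    and metric_sym: "x \<in> U \<Longrightarrow> g x $ i $ j = g x $ j $ i"
    and metric_invertible: "x \<in> U \<Longrightarrow> invertible (g x)"
    and metric_smooth: "smooth_on U (\<lambda>x. g x $ i $ j)"

lemma lorentzian_metric_chart:
  assumes "open U" "lorentzian_on U g" "\<And>i j. smooth_on U (\<lambda>x. g x $ i $ j)"
  shows "metric_chart U g"
  using assms lorentzian_on_symmetric lorentzian_on_invertible by unfold_locales blast+

context metric_chart
begin

lemma metric_differentiable: "x \<in> U \<Longrightarrow> (\<lambda>y. g y $ i $ j) differentiable (at x)"
  by (rule smooth_on_differentiable[OF metric_smooth])

lemma partial_metric_sym: "x \<in> U \<Longrightarrow> partial k (\<lambda>y. g y $ i $ j) x = partial k (\<lambda>y. g y $ j $ i) x"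
  by (rule partial_cong_open[OF metric_differentiable open_U]) (auto intro: metric_sym)

lemma ginv_mult_metric: "x \<in> U \<Longrightarrow> (\<Sum>k\<in>UNIV. ginv g x $ i $ k * g x $ k $ j) = (if i = j then 1 else 0)"
  using arg_cong[OF matrix_inv_mult(2)[OF metric_invertible], of x "\<lambda>M. M $ i $ j"]
  by (simp add: ginv_def matrix_matrix_mult_def mat_def)

lemma metric_mult_ginv: "x \<in> U \<Longrightarrow> (\<Sum>k\<in>UNIV. g x $ i $ k * ginv g x $ k $ j) = (if i = j then 1 else 0)"
  using arg_cong[OF matrix_inv_mult(1)[OF metric_invertible], of x "\<lambda>M. M $ i $ j"]
  by (simp add: ginv_def matrix_matrix_mult_def mat_def)

lemma ginv_sym:
  assumes x: "x \<in> U"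
  shows "ginv g x $ i $ j = ginv g x $ j $ i"
proof -
  have R: "g x ** ginv g x = mat 1" using matrix_inv_mult(1)[OF metric_invertible[OF x]] by (simp add: ginv_def)
  have tg: "transpose (g x) = g x" by (simp add: vec_eq_iff transpose_def metric_sym[OF x])
  have "transpose (ginv g x) = transpose (ginv g x) ** (g x ** ginv g x)" by (simp add: R)
  also have "\<dots> = transpose (g x ** ginv g x) ** ginv g x"
    by (simp add: matrix_transpose_mul tg matrix_mul_assoc)
  also have "\<dots> = ginv g x" by (simp add: R)
  finally show ?thesis by (rule transpose_eq_sym)
qed

lemma christoffel_lowered:
  assumes x: "x \<in> U"
  shows "(\<Sum>k\<in>UNIV. christoffel g x k i j * g x $ k $ l) = christoffel_first g x l i j"
proof -
  have "(\<Sum>k\<in>UNIV. christoffel g x k i j * g x $ k $ l)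
      = (\<Sum>k\<in>UNIV. \<Sum>m\<in>UNIV. g x $ l $ k * ginv g x $ k $ m * christoffel_first g x m i j)"
    by (simp add: christoffel_eq_ginv_christoffel_first sum_distrib_left sum_distrib_right metric_sym[OF x, of _ l] mult_ac)
  also have "\<dots> = (\<Sum>m\<in>UNIV. (\<Sum>k\<in>UNIV. g x $ l $ k * ginv g x $ k $ m) * christoffel_first g x m i j)"
    by (subst sum.swap) (simp add: sum_distrib_right)
  also have "\<dots> = christoffel_first g x l i j" by (simp only: metric_mult_ginv[OF x] sum_mult_delta)
  finally show ?thesis .
qed

lemma metric_compatibility:
  assumes x: "x \<in> U"
  shows "christoffel_first g x j i k + christoffel_first g x k i j = partial i (\<lambda>y. g y $ j $ k) x"
  using partial_metric_sym[OF x, of i k j] partial_metric_sym[OF x, of k j i] partial_metric_sym[OF x, of j k i]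
  unfolding christoffel_first_def by (simp add: algebra_simps)

end

section \<open>Algebra of a unit timelike covector at a point\<close>

definition cyclic_sum :: "('n \<Rightarrow> 'n \<Rightarrow> 'n \<Rightarrow> 'a::plus) \<Rightarrow> 'n \<Rightarrow> 'n \<Rightarrow> 'n \<Rightarrow> 'a" where
  "cyclic_sum T i j l = T i j l + T j l i + T l i j"

locale unit_frame =
  fixes G Gi :: "'n::finite \<Rightarrow> 'n \<Rightarrow> real" and U L :: "'n \<Rightarrow> real"
  assumes G_sym: "G i j = G j i"
    and Gi_sym: "Gi i j = Gi j i"
    and Gi_G: "(\<Sum>k\<in>UNIV. Gi i k * G k j) = (if i = j then 1 else 0)"
    and L_def: "L j = (\<Sum>k\<in>UNIV. G j k * U k)"
    and U_L: "(\<Sum>j\<in>UNIV. U j * L j) = -1"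
begin

lemma U_G: "(\<Sum>l\<in>UNIV. U l * G j l) = L j"
  by (simp add: L_def mult.commute)

lemma U_G': "(\<Sum>l\<in>UNIV. U l * G l j) = L j"
  by (simp add: L_def G_sym[of _ j] mult.commute)

lemma Gi_L: "(\<Sum>l\<in>UNIV. Gi j l * L l) = U j"
proof -
  have "(\<Sum>l\<in>UNIV. Gi j l * L l) = (\<Sum>l\<in>UNIV. \<Sum>k\<in>UNIV. Gi j l * G l k * U k)"
    by (simp add: L_def sum_distrib_left mult.assoc)
  also have "\<dots> = (\<Sum>k\<in>UNIV. (\<Sum>l\<in>UNIV. Gi j l * G l k) * U k)"
    by (subst sum.swap) (simp add: sum_distrib_right)
  also have "\<dots> = U j" by (simp only: Gi_G sum_mult_delta)
  finally show ?thesis .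
qed

lemma Gi_h: "(\<Sum>l\<in>UNIV. Gi j l * (G l i + L l * L i)) = (if j = i then 1 else 0) + U j * L i"
proof -
  have "(\<Sum>l\<in>UNIV. Gi j l * (G l i + L l * L i)) = (\<Sum>l\<in>UNIV. Gi j l * G l i) + (\<Sum>l\<in>UNIV. Gi j l * L l) * L i"
    by (simp add: distrib_left sum.distrib sum_distrib_right mult.assoc)
  then show ?thesis by (simp only: Gi_G Gi_L)
qed

lemma trace_h: "(\<Sum>j\<in>UNIV. \<Sum>l\<in>UNIV. Gi j l * (G j l + L j * L l)) = real CARD('n) - 1"
proof -
  have "(\<Sum>j\<in>UNIV. \<Sum>l\<in>UNIV. Gi j l * (G j l + L j * L l))
      = (\<Sum>j\<in>UNIV. \<Sum>l\<in>UNIV. Gi j l * (G l j + L l * L j))"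
    by (intro sum.cong refl) (metis G_sym mult.commute)
  also have "\<dots> = (\<Sum>j\<in>UNIV. 1 + U j * L j)" by (simp only: Gi_h) simp
  finally show ?thesis by (simp add: sum.distrib U_L)
qed

lemma trace_spatial:
  assumes "(\<Sum>j\<in>UNIV. U j * a j) = 0"
  shows "(\<Sum>i\<in>UNIV. \<Sum>j\<in>UNIV. Gi i j * ((P i j + P j i) / 2 + (L i * a j + L j * a i) / 2 - H * (G i j + L i * L j)))
    = (\<Sum>i\<in>UNIV. \<Sum>j\<in>UNIV. Gi i j * P i j) - (real CARD('n) - 1) * H"
proof -
  have swap: "(\<Sum>i\<in>UNIV. \<Sum>j\<in>UNIV. Gi i j * f j i) = (\<Sum>i\<in>UNIV. \<Sum>j\<in>UNIV. Gi i j * f i j)" for f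
    by (subst sum.swap) (simp add: Gi_sym)
  have La: "(\<Sum>i\<in>UNIV. \<Sum>j\<in>UNIV. Gi i j * (L j * a i)) = 0"
  proof -
    have "(\<Sum>i\<in>UNIV. \<Sum>j\<in>UNIV. Gi i j * (L j * a i)) = (\<Sum>i\<in>UNIV. a i * (\<Sum>j\<in>UNIV. Gi i j * L j))"
      by (simp add: sum_distrib_left mult_ac)
    also have "\<dots> = (\<Sum>i\<in>UNIV. a i * U i)" by (simp only: Gi_L)
    finally show ?thesis by (simp add: assms mult.commute)
  qed
  have "(\<Sum>i\<in>UNIV. \<Sum>j\<in>UNIV. Gi i j * ((P i j + P j i) / 2 + (L i * a j + L j * a i) / 2 - H * (G i j + L i * L j)))
      = ((\<Sum>i\<in>UNIV. \<Sum>j\<in>UNIV. Gi i j * P i j) + (\<Sum>i\<in>UNIV. \<Sum>j\<in>UNIV. Gi i j * P j i)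
         + (\<Sum>i\<in>UNIV. \<Sum>j\<in>UNIV. Gi i j * (L i * a j)) + (\<Sum>i\<in>UNIV. \<Sum>j\<in>UNIV. Gi i j * (L j * a i))) / 2
        - H * (\<Sum>i\<in>UNIV. \<Sum>j\<in>UNIV. Gi i j * (G i j + L i * L j))"
    by (simp add: sum.distrib sum_subtractf sum_distrib_left sum_divide_distrib algebra_simps add_divide_distrib)
  also have "\<dots> = (\<Sum>i\<in>UNIV. \<Sum>j\<in>UNIV. Gi i j * P i j) - (real CARD('n) - 1) * H"
    by (simp only: swap[of P] swap[of "\<lambda>i j. L j * a i"] La trace_h) simp
  finally show ?thesis .
qed

lemma accel_orthogonal:
  assumes P_U: "\<And>i. (\<Sum>j\<in>UNIV. P i j * U j) = 0" and a_def: "\<And>j. a j = (\<Sum>k\<in>UNIV. U k * P k j)"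
  shows "(\<Sum>j\<in>UNIV. U j * a j) = 0"
proof -
  have "(\<Sum>j\<in>UNIV. U j * a j) = (\<Sum>j\<in>UNIV. \<Sum>k\<in>UNIV. U k * (P k j * U j))"
    by (simp add: a_def sum_distrib_left mult_ac)
  also have "\<dots> = (\<Sum>k\<in>UNIV. U k * (\<Sum>j\<in>UNIV. P k j * U j))"
    by (subst sum.swap) (simp add: sum_distrib_left)
  finally show ?thesis by (simp add: P_U)
qed

lemma spatial_orthogonal:
  assumes P_U: "\<And>i. (\<Sum>j\<in>UNIV. P i j * U j) = 0" and a_def: "\<And>j. a j = (\<Sum>k\<in>UNIV. U k * P k j)"
  shows "(\<Sum>j\<in>UNIV. ((P i j + P j i) / 2 + (L i * a j + L j * a i) / 2 - k * (G i j + L i * L j)) * U j) = 0"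
proof -
  have "(\<Sum>j\<in>UNIV. ((P i j + P j i) / 2 + (L i * a j + L j * a i) / 2 - k * (G i j + L i * L j)) * U j)
      = ((\<Sum>j\<in>UNIV. P i j * U j) + (\<Sum>j\<in>UNIV. U j * P j i) + L i * (\<Sum>j\<in>UNIV. U j * a j)
         + a i * (\<Sum>j\<in>UNIV. U j * L j)) / 2 - k * ((\<Sum>j\<in>UNIV. U j * G i j) + L i * (\<Sum>j\<in>UNIV. U j * L j))"
    by (simp add: sum.distrib sum_subtractf sum_distrib_left sum_distrib_right sum_divide_distrib
        algebra_simps add_divide_distrib)
  then show ?thesis
    by (simp add: P_U a_def[symmetric] accel_orthogonal[OF P_U a_def] U_L U_G)
qed

lemma contract_U:
  "(\<Sum>l\<in>UNIV. U l * cyclic_sum (\<lambda>i j l. e i * G j l + b i * L j * L l + c * S i j * L l) i j l)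
   = e i * (\<Sum>l\<in>UNIV. U l * G j l) + b i * L j * (\<Sum>l\<in>UNIV. U l * L l) + c * S i j * (\<Sum>l\<in>UNIV. U l * L l)
   + e j * (\<Sum>l\<in>UNIV. U l * G l i) + b j * L i * (\<Sum>l\<in>UNIV. U l * L l) + c * L i * (\<Sum>l\<in>UNIV. S j l * U l)
   + G i j * (\<Sum>l\<in>UNIV. U l * e l) + L i * L j * (\<Sum>l\<in>UNIV. U l * b l) + c * L j * (\<Sum>l\<in>UNIV. S l i * U l)"
  unfolding cyclic_sum_def by (simp add: sum.distrib sum_distrib_left algebra_simps)

lemma contract_Gi:
  "(\<Sum>j\<in>UNIV. \<Sum>l\<in>UNIV. Gi j l * cyclic_sum (\<lambda>i j l. e i * (G j l + L j * L l)) i j l)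
   = (real CARD('n) + 1) * e i + 2 * (\<Sum>j\<in>UNIV. U j * e j) * L i"
proof -
  have second: "(\<Sum>j\<in>UNIV. \<Sum>l\<in>UNIV. Gi j l * (e j * (G l i + L l * L i))) = e i + (\<Sum>j\<in>UNIV. U j * e j) * L i"
  proof -
    have "(\<Sum>j\<in>UNIV. \<Sum>l\<in>UNIV. Gi j l * (e j * (G l i + L l * L i)))
        = (\<Sum>j\<in>UNIV. e j * (\<Sum>l\<in>UNIV. Gi j l * (G l i + L l * L i)))"
      by (simp add: sum_distrib_left mult_ac)
    also have "\<dots> = (\<Sum>j\<in>UNIV. e j * (if j = i then 1 else 0)) + (\<Sum>j\<in>UNIV. U j * e j * L i)"
      by (simp only: Gi_h) (simp only: distrib_left sum.distrib, simp add: mult_ac)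
    also have "\<dots> = e i + (\<Sum>j\<in>UNIV. U j * e j) * L i" by (simp only: sum_mult_delta sum_distrib_right)
    finally show ?thesis .
  qed
  have third: "(\<Sum>j\<in>UNIV. \<Sum>l\<in>UNIV. Gi j l * (e l * (G i j + L i * L j)))
      = (\<Sum>j\<in>UNIV. \<Sum>l\<in>UNIV. Gi j l * (e j * (G l i + L l * L i)))"
    by (subst sum.swap) (intro sum.cong refl; metis Gi_sym G_sym mult.commute)
  have "(\<Sum>j\<in>UNIV. \<Sum>l\<in>UNIV. Gi j l * cyclic_sum (\<lambda>i j l. e i * (G j l + L j * L l)) i j l)
      = e i * (\<Sum>j\<in>UNIV. \<Sum>l\<in>UNIV. Gi j l * (G j l + L j * L l))
        + (\<Sum>j\<in>UNIV. \<Sum>l\<in>UNIV. Gi j l * (e j * (G l i + L l * L i)))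
        + (\<Sum>j\<in>UNIV. \<Sum>l\<in>UNIV. Gi j l * (e l * (G i j + L i * L j)))"
    unfolding cyclic_sum_def by (simp add: distrib_left sum.distrib sum_distrib_left mult_ac)
  also have "\<dots> = e i * (real CARD('n) - 1) + 2 * (e i + (\<Sum>j\<in>UNIV. U j * e j) * L i)"
    by (simp only: third second trace_h) simp
  finally show ?thesis by (simp add: algebra_simps)
qed

lemma cyclic_rigidity:
  fixes e b :: "'n \<Rightarrow> real" and S :: "'n \<Rightarrow> 'n \<Rightarrow> real"
  assumes U_b: "(\<Sum>j\<in>UNIV. U j * b j) = 0"
    and S_sym: "\<And>i j. S i j = S j i"
    and S_U: "\<And>i. (\<Sum>j\<in>UNIV. S i j * U j) = 0"
    and c: "c \<noteq> 0"
    and cyc: "\<And>i j l. cyclic_sum (\<lambda>i j l. e i * G j l + b i * L j * L l + c * S i j * L l) i j l = 0"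
  shows "e i = 0" and "b i = 0" and "S i j = 0"
proof -
  define Ue where "Ue = (\<Sum>l\<in>UNIV. U l * e l)"
  have S_U': "(\<Sum>l\<in>UNIV. S l i * U l) = 0" for i using S_U[of i] by (simp add: S_sym[of _ i])
  have contracted_U: "(e i - b i) * L j + (e j - b j) * L i + Ue * G i j - c * S i j = 0" for i j
  proof -
    have "(\<Sum>l\<in>UNIV. U l * cyclic_sum (\<lambda>i j l. e i * G j l + b i * L j * L l + c * S i j * L l) i j l) = 0"
      by (simp add: cyc)
    then show ?thesis
      unfolding contract_U U_G U_G' U_L S_U S_U' U_b Ue_def[symmetric] by (simp add: algebra_simps)
  qed
  have e_minus_b: "e i - b i = 2 * Ue * L i" for i
  proof -
    have "0 = (\<Sum>j\<in>UNIV. U j * ((e i - b i) * L j + (e j - b j) * L i + Ue * G i j - c * S i j))"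
      by (simp add: contracted_U)
    also have "\<dots> = (e i - b i) * (\<Sum>j\<in>UNIV. U j * L j) + ((\<Sum>j\<in>UNIV. U j * e j) - (\<Sum>j\<in>UNIV. U j * b j)) * L i
          + Ue * (\<Sum>j\<in>UNIV. U j * G i j) - c * (\<Sum>j\<in>UNIV. S i j * U j)"
      by (simp add: sum.distrib sum_subtractf sum_distrib_left sum_distrib_right algebra_simps)
    also have "\<dots> = - (e i - b i) + 2 * Ue * L i"
      unfolding U_L U_G U_b S_U Ue_def[symmetric] by (simp add: algebra_simps)
    finally show ?thesis by simp
  qed
  have "Ue = -2 * Ue"
  proof -
    have "Ue = (\<Sum>i\<in>UNIV. U i * (e i - b i))"
      by (simp add: Ue_def right_diff_distrib sum_subtractf U_b)
    also have "\<dots> = 2 * Ue * (\<Sum>i\<in>UNIV. U i * L i)" by (simp add: e_minus_b sum_distrib_left mult_ac)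
    finally show ?thesis by (simp add: U_L)
  qed
  then have Ue0: "Ue = 0" by simp
  then have b_eq_e: "b i = e i" for i using e_minus_b[of i] by simp
  show S0: "S i j = 0" for i j using contracted_U[of i j] b_eq_e Ue0 c by simp
  have "cyclic_sum (\<lambda>i j l. e i * (G j l + L j * L l)) i j l = 0" for i j l
    using cyc[of i j l] unfolding b_eq_e S0 cyclic_sum_def by (simp add: algebra_simps)
  then have "(real CARD('n) + 1) * e i = 0"
    using contract_Gi[of e i] Ue0 by (simp add: Ue_def)
  moreover have "real CARD('n) + 1 \<noteq> 0" by (simp add: add_nonneg_eq_0_iff)
  ultimately show "e i = 0" by simp
  then show "b i = 0" by (simp add: b_eq_e)
qed

end

lemma cyclic_sum_fluid_decomposition:
  fixes G P :: "'n \<Rightarrow> 'n \<Rightarrow> real" and L al b eta a :: "'n \<Rightarrow> real"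
  assumes "Bd = 2 * B * k"
  shows "cyclic_sum (\<lambda>i j l. al i * G j l + b i * L j * L l + B * (P i j * L l + L j * P i l)) i j l
      - cyclic_sum (\<lambda>i j l. eta i * G j l) i j l
    = cyclic_sum (\<lambda>i j l. (al i + Bd * L i - eta i) * G j l + (b i + Bd * L i - 2 * B * a i) * L j * L l
        + 2 * B * ((P i j + P j i) / 2 + (L i * a j + L j * a i) / 2 - k * (G i j + L i * L j)) * L l) i j l"
  using assms unfolding cyclic_sum_def by (simp add: field_simps)

section \<open>Unit timelike flows\<close>

definition shear_with_expansion ::
    "(real^'n::finite \<Rightarrow> real^'n^'n) \<Rightarrow> (real^'n \<Rightarrow> real^'n) \<Rightarrow> real \<Rightarrow> real^'n \<Rightarrow> 'n \<Rightarrow> 'n \<Rightarrow> real" where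
  "shear_with_expansion g u H x i j =
     (cov_d1 g (lower g u) x i j + cov_d1 g (lower g u) x j i) / 2
     + (lower g u x i * accel g u x j + lower g u x j * accel g u x i) / 2
     - H * (g x $ i $ j + lower g u x i * lower g u x j)"

lemma shear_eq_shear_with_expansion: "shear g u x i j = shear_with_expansion g u (expansion g u x) x i j"
  unfolding shear_def shear_with_expansion_def ..

lemma shear_with_expansion_shift:
  "shear_with_expansion g u H x i j = shear g u x i j + (expansion g u x - H) * (g x $ i $ j + lower g u x i * lower g u x j)"
  unfolding shear_def shear_with_expansion_def by (simp add: algebra_simps)

locale unit_flow = metric_chart U g for U :: "(real^'n::finite) set" and g +
  fixes u :: "real^'n \<Rightarrow> real^'n"
  assumes velocity_smooth: "smooth_on U (\<lambda>x. u x $ i)"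
    and unit_velocity: "x \<in> U \<Longrightarrow> (\<Sum>i\<in>UNIV. \<Sum>j\<in>UNIV. g x $ i $ j * u x $ i * u x $ j) = -1"
begin

lemma velocity_differentiable: "x \<in> U \<Longrightarrow> (\<lambda>y. u y $ i) differentiable (at x)"
  by (rule smooth_on_differentiable[OF velocity_smooth])

lemma lower_differentiable: "x \<in> U \<Longrightarrow> (\<lambda>y. lower g u y j) differentiable (at x)"
  unfolding lower_def by (simp add: metric_differentiable velocity_differentiable)

lemma unit_frame_at:
  assumes x: "x \<in> U"
  shows "unit_frame (\<lambda>i j. g x $ i $ j) (\<lambda>i j. ginv g x $ i $ j) (\<lambda>k. u x $ k) (lower g u x)"
proof
  show "g x $ i $ j = g x $ j $ i" for i j by (rule metric_sym[OF x])
  show "ginv g x $ i $ j = ginv g x $ j $ i" for i j by (rule ginv_sym[OF x])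
  show "(\<Sum>k\<in>UNIV. ginv g x $ i $ k * g x $ k $ j) = (if i = j then 1 else 0)" for i j
    by (rule ginv_mult_metric[OF x])
  show "lower g u x j = (\<Sum>k\<in>UNIV. g x $ j $ k * u x $ k)" for j by (rule lower_def)
  show "(\<Sum>j\<in>UNIV. u x $ j * lower g u x j) = -1"
    using unit_velocity[OF x] by (simp add: lower_def sum_distrib_left mult_ac)
qed

lemma partial_lower:
  assumes x: "x \<in> U"
  shows "partial i (\<lambda>y. lower g u y j) x
    = (\<Sum>k\<in>UNIV. partial i (\<lambda>y. g y $ j $ k) x * u x $ k + g x $ j $ k * partial i (\<lambda>y. u y $ k) x)"
proof -
  have "partial i (\<lambda>y. lower g u y j) x = (\<Sum>k\<in>UNIV. partial i (\<lambda>y. g y $ j $ k * u y $ k) x)"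
    unfolding lower_def
    by (rule partial_sum[of "\<lambda>k y. g y $ j $ k * u y $ k", simplified])
      (simp add: metric_differentiable[OF x] velocity_differentiable[OF x])
  then show ?thesis
    by (simp add: partial_mult[OF metric_differentiable[OF x] velocity_differentiable[OF x]])
qed

lemma christoffel_lower:
  assumes x: "x \<in> U"
  shows "(\<Sum>k\<in>UNIV. christoffel g x k i j * lower g u x k) = (\<Sum>m\<in>UNIV. u x $ m * christoffel_first g x m i j)"
proof -
  have "(\<Sum>k\<in>UNIV. christoffel g x k i j * lower g u x k)
      = (\<Sum>k\<in>UNIV. \<Sum>m\<in>UNIV. christoffel g x k i j * g x $ k $ m * u x $ m)"
    by (simp add: lower_def sum_distrib_left mult.assoc)
  also have "\<dots> = (\<Sum>m\<in>UNIV. (\<Sum>k\<in>UNIV. christoffel g x k i j * g x $ k $ m) * u x $ m)"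
    by (subst sum.swap) (simp add: sum_distrib_right)
  finally show ?thesis unfolding christoffel_lowered[OF x] by (simp add: mult.commute)
qed

lemma cov_d1_lower:
  "x \<in> U \<Longrightarrow> cov_d1 g (lower g u) x i j
    = (\<Sum>k\<in>UNIV. partial i (\<lambda>y. g y $ j $ k) x * u x $ k + g x $ j $ k * partial i (\<lambda>y. u y $ k) x)
      - (\<Sum>m\<in>UNIV. u x $ m * christoffel_first g x m i j)"
  unfolding cov_d1_def by (simp add: partial_lower christoffel_lower)

lemma unit_derivative:
  assumes x: "x \<in> U"
  shows "(\<Sum>j\<in>UNIV. \<Sum>k\<in>UNIV. partial i (\<lambda>y. g y $ j $ k) x * u x $ j * u x $ k
     + g x $ j $ k * partial i (\<lambda>y. u y $ j) x * u x $ k + g x $ j $ k * u x $ j * partial i (\<lambda>y. u y $ k) x) = 0"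
proof -
  note dg = metric_differentiable[OF x] and du = velocity_differentiable[OF x]
  have "0 = partial i (\<lambda>y. \<Sum>j\<in>UNIV. \<Sum>k\<in>UNIV. g y $ j $ k * u y $ j * u y $ k) x"
    by (rule partial_locally_constant[OF open_U x, symmetric]) (rule unit_velocity)
  also have "\<dots> = (\<Sum>j\<in>UNIV. \<Sum>k\<in>UNIV. partial i (\<lambda>y. g y $ j $ k * u y $ j * u y $ k) x)"
    by (subst partial_sum, simp add: dg du, rule sum.cong[OF refl], rule partial_sum) (simp add: dg du)
  also have "\<dots> = (\<Sum>j\<in>UNIV. \<Sum>k\<in>UNIV. partial i (\<lambda>y. g y $ j $ k) x * u x $ j * u x $ k
     + g x $ j $ k * partial i (\<lambda>y. u y $ j) x * u x $ k + g x $ j $ k * u x $ j * partial i (\<lambda>y. u y $ k) x)"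
    by (simp add: partial_mult dg du algebra_simps)
  finally show ?thesis by simp
qed

lemma velocity_orthogonal:
  assumes x: "x \<in> U"
  shows "(\<Sum>j\<in>UNIV. cov_d1 g (lower g u) x i j * u x $ j) = 0"
proof -
  define D where "D = (\<Sum>j\<in>UNIV. \<Sum>k\<in>UNIV. partial i (\<lambda>y. g y $ j $ k) x * u x $ j * u x $ k)"
  define W where "W = (\<Sum>j\<in>UNIV. \<Sum>k\<in>UNIV. g x $ j $ k * u x $ j * partial i (\<lambda>y. u y $ k) x)"
  define C where "C = (\<Sum>j\<in>UNIV. \<Sum>m\<in>UNIV. u x $ j * u x $ m * christoffel_first g x m i j)"
  have "(\<Sum>j\<in>UNIV. cov_d1 g (lower g u) x i j * u x $ j) = D + W - C"
    unfolding D_def W_def C_def cov_d1_lower[OF x]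
    by (simp add: sum_distrib_left sum_distrib_right sum_subtractf sum.distrib algebra_simps)
  moreover have "2 * C = D"
  proof -
    have "C = (\<Sum>j\<in>UNIV. \<Sum>m\<in>UNIV. u x $ j * u x $ m * christoffel_first g x j i m)"
      unfolding C_def by (subst sum.swap) (simp add: mult_ac)
    then have "2 * C = (\<Sum>j\<in>UNIV. \<Sum>m\<in>UNIV. u x $ j * u x $ m * (christoffel_first g x j i m + christoffel_first g x m i j))"
      by (simp add: C_def distrib_left sum.distrib)
    then show ?thesis unfolding metric_compatibility[OF x] D_def by (simp add: mult_ac)
  qed
  moreover have "D + 2 * W = 0"
  proof -
    have "(\<Sum>j\<in>UNIV. \<Sum>k\<in>UNIV. g x $ j $ k * partial i (\<lambda>y. u y $ j) x * u x $ k) = W"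
      unfolding W_def by (subst sum.swap) (simp add: metric_sym[OF x] mult_ac)
    then show ?thesis using unit_derivative[OF x, of i] unfolding D_def W_def sum.distrib by linarith
  qed
  ultimately show ?thesis by linarith
qed

lemma expansion_eq_trace:
  assumes x: "x \<in> U"
  shows "expansion g u x
    = (\<Sum>i\<in>UNIV. \<Sum>j\<in>UNIV. ginv g x $ i $ j * cov_d1 g (lower g u) x i j) / (real CARD('n) - 1)"
proof -
  define T where "T = (\<Sum>i\<in>UNIV. \<Sum>j\<in>UNIV. \<Sum>k\<in>UNIV. ginv g x $ i $ j * (partial i (\<lambda>y. g y $ j $ k) x * u x $ k))"
  define C where "C = (\<Sum>i\<in>UNIV. \<Sum>j\<in>UNIV. \<Sum>k\<in>UNIV. ginv g x $ i $ j * (u x $ k * christoffel_first g x k i j))"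
  have trace_P: "(\<Sum>i\<in>UNIV. \<Sum>j\<in>UNIV. ginv g x $ i $ j * cov_d1 g (lower g u) x i j)
      = T + (\<Sum>i\<in>UNIV. \<Sum>j\<in>UNIV. \<Sum>k\<in>UNIV. ginv g x $ i $ j * (g x $ j $ k * partial i (\<lambda>y. u y $ k) x)) - C"
    unfolding T_def C_def cov_d1_lower[OF x]
    by (simp add: sum_distrib_left sum.distrib sum_subtractf right_diff_distrib distrib_left)
  have div: "(\<Sum>i\<in>UNIV. \<Sum>j\<in>UNIV. \<Sum>k\<in>UNIV. ginv g x $ i $ j * (g x $ j $ k * partial i (\<lambda>y. u y $ k) x))
      = (\<Sum>i\<in>UNIV. partial i (\<lambda>y. u y $ i) x)"
  proof -
    have "(\<Sum>i\<in>UNIV. \<Sum>j\<in>UNIV. \<Sum>k\<in>UNIV. ginv g x $ i $ j * (g x $ j $ k * partial i (\<lambda>y. u y $ k) x))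
        = (\<Sum>i\<in>UNIV. \<Sum>k\<in>UNIV. (\<Sum>j\<in>UNIV. ginv g x $ i $ j * g x $ j $ k) * partial i (\<lambda>y. u y $ k) x)"
      by (rule sum.cong[OF refl], subst sum.swap) (simp add: sum_distrib_right mult.assoc)
    then show ?thesis by (simp only: ginv_mult_metric[OF x] sum_mult_delta)
  qed
  have contracted: "(\<Sum>r\<in>UNIV. \<Sum>k\<in>UNIV. christoffel g x r r k * u x $ k)
      = (\<Sum>i\<in>UNIV. \<Sum>j\<in>UNIV. \<Sum>k\<in>UNIV. ginv g x $ i $ j * (christoffel_first g x j i k * u x $ k))"
    unfolding christoffel_eq_ginv_christoffel_first sum_distrib_right
    by (rule sum.cong[OF refl], subst sum.swap) (simp add: mult.assoc)
  have "(\<Sum>i\<in>UNIV. \<Sum>j\<in>UNIV. \<Sum>k\<in>UNIV. ginv g x $ i $ j * (christoffel_first g x j i k * u x $ k)) + C = T"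
    unfolding T_def C_def sum.distrib[symmetric]
    by (intro sum.cong refl) (simp add: metric_compatibility[OF x, symmetric] algebra_simps)
  then have "(\<Sum>r\<in>UNIV. partial r (\<lambda>y. u y $ r) x) + (\<Sum>r\<in>UNIV. \<Sum>k\<in>UNIV. christoffel g x r r k * u x $ k)
      = (\<Sum>i\<in>UNIV. \<Sum>j\<in>UNIV. ginv g x $ i $ j * cov_d1 g (lower g u) x i j)"
    using trace_P div contracted by linarith
  then show ?thesis unfolding expansion_def by (simp add: divide_inverse mult.commute)
qed

lemma cov_d2_perfect_fluid:
  assumes x: "x \<in> U" and dA: "A differentiable (at x)" and dB: "B differentiable (at x)"
  shows "cov_d2 g (perfect_fluid g u A B) x i j l
    = partial i A x * g x $ j $ l + partial i B x * lower g u x j * lower g u x l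
      + B x * (cov_d1 g (lower g u) x i j * lower g u x l + lower g u x j * cov_d1 g (lower g u) x i l)"
proof -
  note dg = metric_differentiable[OF x] and dL = lower_differentiable[OF x]
  have dBL: "(\<lambda>y. B y * lower g u y j) differentiable (at x)" by (simp add: dB dL)
  have pK: "partial i (\<lambda>y. perfect_fluid g u A B y j l) x
      = partial i A x * g x $ j $ l + A x * partial i (\<lambda>y. g y $ j $ l) x
        + (partial i B x * lower g u x j + B x * partial i (\<lambda>y. lower g u y j) x) * lower g u x l
        + B x * lower g u x j * partial i (\<lambda>y. lower g u y l) x"
    unfolding perfect_fluid_def
    by (simp add: partial_add dA dB dg dL partial_mult[OF dA dg] partial_mult[OF dBL dL] partial_mult[OF dB dL])
  have "(\<Sum>k\<in>UNIV. christoffel g x k i j * perfect_fluid g u A B x k l)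
      = A x * (\<Sum>k\<in>UNIV. christoffel g x k i j * g x $ k $ l)
        + B x * lower g u x l * (\<Sum>k\<in>UNIV. christoffel g x k i j * lower g u x k)"
    by (simp add: perfect_fluid_def algebra_simps sum.distrib sum_distrib_left)
  moreover have "(\<Sum>k\<in>UNIV. christoffel g x k i l * perfect_fluid g u A B x j k)
      = A x * (\<Sum>k\<in>UNIV. christoffel g x k i l * g x $ k $ j)
        + B x * lower g u x j * (\<Sum>k\<in>UNIV. christoffel g x k i l * lower g u x k)"
    by (simp add: perfect_fluid_def metric_sym[OF x, of j] algebra_simps sum.distrib sum_distrib_left)
  ultimately show ?thesis
    unfolding cov_d2_def pK cov_d1_def christoffel_lowered[OF x]
    by (simp add: metric_compatibility[OF x, of j i l, symmetric] algebra_simps)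
qed

lemma velocity_orthogonal_gradient_defect:
  assumes x: "x \<in> U"
  shows "(\<Sum>j\<in>UNIV. u x $ j * (partial j B x + dotd u B x * lower g u x j - c * accel g u x j)) = 0"
proof -
  interpret frame: unit_frame "\<lambda>i j. g x $ i $ j" "\<lambda>i j. ginv g x $ i $ j" "\<lambda>k. u x $ k" "lower g u x"
    by (rule unit_frame_at[OF x])
  have "(\<Sum>j\<in>UNIV. u x $ j * accel g u x j) = 0"
    by (rule frame.accel_orthogonal[OF velocity_orthogonal[OF x]]) (simp add: accel_def)
  moreover have "(\<Sum>j\<in>UNIV. u x $ j * (partial j B x + dotd u B x * lower g u x j - c * accel g u x j))
      = dotd u B x + dotd u B x * (\<Sum>j\<in>UNIV. u x $ j * lower g u x j) - c * (\<Sum>j\<in>UNIV. u x $ j * accel g u x j)"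
    by (simp add: dotd_def algebra_simps sum.distrib sum_subtractf sum_distrib_left)
  ultimately show ?thesis by (simp add: frame.U_L)
qed

lemma shear_with_expansion_orthogonal:
  "x \<in> U \<Longrightarrow> (\<Sum>j\<in>UNIV. shear_with_expansion g u H x i j * u x $ j) = 0"
  unfolding shear_with_expansion_def
  by (rule unit_frame.spatial_orthogonal[OF unit_frame_at velocity_orthogonal]) (simp_all add: accel_def)

lemma trace_shear_with_expansion:
  assumes x: "x \<in> U" and dim: "CARD('n) \<ge> 2"
  shows "(\<Sum>i\<in>UNIV. \<Sum>j\<in>UNIV. ginv g x $ i $ j * shear_with_expansion g u H x i j)
    = (real CARD('n) - 1) * (expansion g u x - H)"
proof -
  interpret frame: unit_frame "\<lambda>i j. g x $ i $ j" "\<lambda>i j. ginv g x $ i $ j" "\<lambda>k. u x $ k" "lower g u x"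
    by (rule unit_frame_at[OF x])
  have "(\<Sum>j\<in>UNIV. u x $ j * accel g u x j) = 0"
    by (rule frame.accel_orthogonal[OF velocity_orthogonal[OF x]]) (simp add: accel_def)
  then have trace: "(\<Sum>i\<in>UNIV. \<Sum>j\<in>UNIV. ginv g x $ i $ j * shear_with_expansion g u H x i j)
      = (\<Sum>i\<in>UNIV. \<Sum>j\<in>UNIV. ginv g x $ i $ j * cov_d1 g (lower g u) x i j) - (real CARD('n) - 1) * H"
    unfolding shear_with_expansion_def by (rule frame.trace_spatial)
  have "real CARD('n) - 1 \<noteq> 0" using dim by simp
  then have "(real CARD('n) - 1) * expansion g u x
      = (\<Sum>i\<in>UNIV. \<Sum>j\<in>UNIV. ginv g x $ i $ j * cov_d1 g (lower g u) x i j)"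
    by (simp add: expansion_eq_trace[OF x])
  then show ?thesis using trace unfolding right_diff_distrib by simp
qed

lemma cyclic_sum_cov_d2_perfect_fluid:
  assumes x: "x \<in> U" and dA: "A differentiable (at x)" and dB: "B differentiable (at x)" and B0: "B x \<noteq> 0"
  shows "cyclic_sum (cov_d2 g (perfect_fluid g u A B) x) i j l - cyclic_sum (\<lambda>i j l. eta i * g x $ j $ l) i j l
    = cyclic_sum (\<lambda>i j l. (partial i A x + dotd u B x * lower g u x i - eta i) * g x $ j $ l
        + (partial i B x + dotd u B x * lower g u x i - 2 * B x * accel g u x i) * lower g u x j * lower g u x l
        + 2 * B x * shear_with_expansion g u (dotd u B x / (2 * B x)) x i j * lower g u x l) i j l"
proof -
  have "cov_d2 g (perfect_fluid g u A B) x = (\<lambda>i j l. partial i A x * g x $ j $ l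
      + partial i B x * lower g u x j * lower g u x l
      + B x * (cov_d1 g (lower g u) x i j * lower g u x l + lower g u x j * cov_d1 g (lower g u) x i l))"
    by (intro ext) (rule cov_d2_perfect_fluid[OF x dA dB])
  moreover have "dotd u B x = 2 * B x * (dotd u B x / (2 * B x))" using B0 by simp
  ultimately show ?thesis
    unfolding shear_with_expansion_def by (simp only: cyclic_sum_fluid_decomposition)
qed

lemma perfect_fluid_ckt_necessary:
  assumes x: "x \<in> U" and dA: "A differentiable (at x)" and dB: "B differentiable (at x)"
    and B0: "B x \<noteq> 0" and dim: "CARD('n) \<ge> 2"
    and ckt: "\<And>i j l. cyclic_sum (cov_d2 g (perfect_fluid g u A B) x) i j l
      = cyclic_sum (\<lambda>i j l. eta i * g x $ j $ l) i j l"
  shows "eta j = partial j A x + dotd u B x * lower g u x j"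
    and "partial j B x = - dotd u B x * lower g u x j + 2 * B x * accel g u x j"
    and "expansion g u x = dotd u B x / (2 * B x)"
    and "shear g u x i j = 0"
proof -
  interpret frame: unit_frame "\<lambda>i j. g x $ i $ j" "\<lambda>i j. ginv g x $ i $ j" "\<lambda>k. u x $ k" "lower g u x"
    by (rule unit_frame_at[OF x])
  let ?k = "dotd u B x / (2 * B x)"
  have c: "2 * B x \<noteq> 0" using B0 by simp
  have S_sym: "shear_with_expansion g u ?k x i j = shear_with_expansion g u ?k x j i" for i j
    unfolding shear_with_expansion_def by (simp add: metric_sym[OF x, of i j] algebra_simps)
  have cyc: "cyclic_sum (\<lambda>i j l. (partial i A x + dotd u B x * lower g u x i - eta i) * g x $ j $ l
        + (partial i B x + dotd u B x * lower g u x i - 2 * B x * accel g u x i) * lower g u x j * lower g u x l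
        + 2 * B x * shear_with_expansion g u ?k x i j * lower g u x l) i j l = 0" for i j l
    using cyclic_sum_cov_d2_perfect_fluid[OF x dA dB B0, where eta = eta] ckt by simp
  note defects = frame.cyclic_rigidity[where e = "\<lambda>i. partial i A x + dotd u B x * lower g u x i - eta i"
      and b = "\<lambda>i. partial i B x + dotd u B x * lower g u x i - 2 * B x * accel g u x i"
      and S = "shear_with_expansion g u ?k x" and c = "2 * B x",
      OF velocity_orthogonal_gradient_defect[OF x] S_sym shear_with_expansion_orthogonal[OF x] c cyc]
  show "eta j = partial j A x + dotd u B x * lower g u x j" using defects(1)[of j] by simp
  show "partial j B x = - dotd u B x * lower g u x j + 2 * B x * accel g u x j" using defects(2)[of j] by simp
  have "(real CARD('n) - 1) * (expansion g u x - ?k) = 0"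
    using trace_shear_with_expansion[OF x dim, of ?k] by (simp add: defects(3))
  moreover have "real CARD('n) - 1 \<noteq> 0" using dim by simp
  ultimately show H: "expansion g u x = ?k" by simp
  show "shear g u x i j = 0" using defects(3)[of i j] by (simp add: shear_eq_shear_with_expansion H)
qed

lemma perfect_fluid_ckt_sufficient:
  assumes x: "x \<in> U" and dA: "A differentiable (at x)" and dB: "B differentiable (at x)" and B0: "B x \<noteq> 0"
    and shear_free: "\<And>i j. shear g u x i j = 0"
    and H: "expansion g u x = dotd u B x / (2 * B x)"
    and grad_B: "\<And>j. partial j B x = - dotd u B x * lower g u x j + 2 * B x * accel g u x j"
  shows "cyclic_sum (cov_d2 g (perfect_fluid g u A B) x) i j l
    = cyclic_sum (\<lambda>i j l. (partial i A x + dotd u B x * lower g u x i) * g x $ j $ l) i j l"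
  using cyclic_sum_cov_d2_perfect_fluid[OF x dA dB B0, where eta = "\<lambda>i. partial i A x + dotd u B x * lower g u x i"]
  by (simp add: shear_with_expansion_shift shear_free H grad_B cyclic_sum_def)

end

lemma ckt_eq_iff_cyclic_sum:
  "ckt_eq U g K eta \<longleftrightarrow>
     (\<forall>x\<in>U. \<forall>i j l. cyclic_sum (cov_d2 g K x) i j l = cyclic_sum (\<lambda>i j l. eta x i * g x $ j $ l) i j l)"
  unfolding ckt_eq_def cyclic_sum_def ..

theorem theorem1:
  fixes U :: "(real^'n::finite) set"
    and g :: "real^'n \<Rightarrow> real^'n^'n"
    and u :: "real^'n \<Rightarrow> real^'n"
    and A B :: "real^'n \<Rightarrow> real"
  assumes dim: "CARD('n) \<ge> 2"
    and U_open: "open U"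
    and lor: "lorentzian_on U g"
    and g_smooth: "\<And>i j. smooth_on U (\<lambda>x. g x $ i $ j)"
    and u_smooth: "\<And>i. smooth_on U (\<lambda>x. u x $ i)"
    and A_smooth: "smooth_on U A"
    and B_smooth: "smooth_on U B"
    and unit: "\<And>x. x \<in> U \<Longrightarrow> (\<Sum>i\<in>UNIV. \<Sum>j\<in>UNIV. g x $ i $ j * u x $ i * u x $ j) = -1"
    and B_nz: "\<And>x. x \<in> U \<Longrightarrow> B x \<noteq> 0"
  shows "(is_CKT U g (perfect_fluid g u A B) \<longleftrightarrow>
            ((\<forall>x\<in>U. \<forall>i j. shear g u x i j = 0)
             \<and> (\<forall>x\<in>U. expansion g u x = dotd u B x / (2 * B x))
             \<and> (\<forall>x\<in>U. \<forall>j. partial j B x = - dotd u B x * lower g u x j + 2 * B x * accel g u x j)))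
         \<and> (\<forall>eta. ckt_eq U g (perfect_fluid g u A B) eta \<longrightarrow>
               (\<forall>x\<in>U. \<forall>j. eta x j = partial j A x + dotd u B x * lower g u x j))"
proof -
  interpret unit_flow U g u
    by (rule unit_flow.intro[OF lorentzian_metric_chart[OF U_open lor g_smooth]])
      (rule unit_flow_axioms.intro[OF u_smooth unit])
  have dA: "A differentiable (at x)" and dB: "B differentiable (at x)" if "x \<in> U" for x
    using smooth_on_differentiable A_smooth B_smooth that by blast+
  have necessary: "(\<forall>j. eta x j = partial j A x + dotd u B x * lower g u x j) \<and> (\<forall>i j. shear g u x i j = 0)
      \<and> expansion g u x = dotd u B x / (2 * B x)
      \<and> (\<forall>j. partial j B x = - dotd u B x * lower g u x j + 2 * B x * accel g u x j)"
    if "ckt_eq U g (perfect_fluid g u A B) eta" "x \<in> U" for eta x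
    using perfect_fluid_ckt_necessary[where eta = "eta x", OF that(2) dA[OF that(2)] dB[OF that(2)] B_nz[OF that(2)] dim]
      that unfolding ckt_eq_iff_cyclic_sum by blast
  have sufficient: "ckt_eq U g (perfect_fluid g u A B) (\<lambda>x j. partial j A x + dotd u B x * lower g u x j)"
    if "\<forall>x\<in>U. (\<forall>i j. shear g u x i j = 0) \<and> expansion g u x = dotd u B x / (2 * B x)
         \<and> (\<forall>j. partial j B x = - dotd u B x * lower g u x j + 2 * B x * accel g u x j)"
    unfolding ckt_eq_iff_cyclic_sum
  proof (intro ballI allI)
    fix x i j l assume x: "x \<in> U"
    show "cyclic_sum (cov_d2 g (perfect_fluid g u A B) x) i j l
      = cyclic_sum (\<lambda>i j l. (partial i A x + dotd u B x * lower g u x i) * g x $ j $ l) i j l"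
      by (rule perfect_fluid_ckt_sufficient[OF x dA[OF x] dB[OF x] B_nz[OF x]]) (use that x in auto)
  qed
  show ?thesis unfolding is_CKT_def using necessary sufficient by blast
qed

end
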